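(* Let $(X,\mu)$ and $(Y,\nu)$ be probability spaces and $R$ a measure on $X\times Y$. For $\phi\colon Y\to\mathbb{R}$ let $$\phi^+(x)=\ln\Big(\int_Y e^{\phi(y)}\,R(dx,dy)/\mu(dx)\Big)$$ (a Radon--Nikodym derivative, assumed well-defined). Let $F(\phi)=\int_X\phi^+\,d\mu$, let $F^*$ be its convex conjugate, and let $H_\nu(\rho)=H(\rho|\nu)=\int\ln(\rho/\nu)\,d\rho$. Then for all probability measures $\rho,\widetilde\rho$ on $Y$, $$H_\nu(\widetilde\rho|\rho)\le F^*(\widetilde\rho|\rho).$$
   Context: For a differentiable convex functional $G$, its Bregman divergence is $$G(a|b)=G(a)-G(b)-\langle G'(b),a-b\rangle,$$ where $G'$ is the derivative (first variation) and $\langle\cdot,\cdot\rangle$ is the pairing between functions and measures on $Y$, $\langle\phi,\rho\rangle=\int\phi\,d\rho$. The convex conjugate is $F^*(\rho)=\sup_\phi\langle\phi,\rho\rangle-F(\phi)$. The derivative $F'(\phi)$ is the $Y$-marginal of $e^{\phi(y)-\phi^+(x)}R(dx,dy)$, and $(F^* )'$ inverts $F'$. *)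

theory Defs
  imports "HOL-Probability.Probability"
begin

definition bregman :: "('a measure \<Rightarrow> ereal) \<Rightarrow> ('a measure \<Rightarrow> 'a \<Rightarrow> real)
    \<Rightarrow> 'a measure \<Rightarrow> 'a measure \<Rightarrow> ereal" where
  "bregman G G' a b = G a - G b - ereal ((\<integral>y. G' b y \<partial>a) - (\<integral>y. G' b y \<partial>b))"

definition rel_entropy :: "'b measure \<Rightarrow> 'b measure \<Rightarrow> ereal" where
  "rel_entropy \<nu> \<rho> =
     (if absolutely_continuous \<nu> \<rho> \<and> integrable \<rho> (\<lambda>y. ln (enn2real (RN_deriv \<nu> \<rho> y)))
      then ereal (\<integral>y. ln (enn2real (RN_deriv \<nu> \<rho> y)) \<partial>\<rho>) else \<infinity>)"

definition rel_entropy_deriv :: "'b measure \<Rightarrow> 'b measure \<Rightarrow> 'b \<Rightarrow> real" where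
  "rel_entropy_deriv \<nu> \<rho> y = ln (enn2real (RN_deriv \<nu> \<rho> y)) + 1"

definition margX :: "('a \<times> 'b) measure \<Rightarrow> 'a measure \<Rightarrow> ('b \<Rightarrow> real) \<Rightarrow> 'a measure" where
  "margX R \<mu> \<phi> = distr (density R (\<lambda>(x,y). ennreal (exp (\<phi> y)))) \<mu> fst"

text \<open>phi^+ is well-defined: the marginal has a (strictly positive, finite) density
  e^{f} w.r.t. mu.\<close>
definition phi_plus_wd :: "('a \<times> 'b) measure \<Rightarrow> 'a measure \<Rightarrow> ('b \<Rightarrow> real) \<Rightarrow> bool" where
  "phi_plus_wd R \<mu> \<phi> \<longleftrightarrow>
     (\<exists>f \<in> borel_measurable \<mu>. margX R \<mu> \<phi> = density \<mu> (\<lambda>x. ennreal (exp (f x))))"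

definition phi_plus :: "('a \<times> 'b) measure \<Rightarrow> 'a measure \<Rightarrow> ('b \<Rightarrow> real) \<Rightarrow> 'a \<Rightarrow> real" where
  "phi_plus R \<mu> \<phi> x = ln (enn2real (RN_deriv \<mu> (margX R \<mu> \<phi>) x))"

definition Ffun :: "('a \<times> 'b) measure \<Rightarrow> 'a measure \<Rightarrow> ('b \<Rightarrow> real) \<Rightarrow> real" where
  "Ffun R \<mu> \<phi> = (\<integral>x. phi_plus R \<mu> \<phi> x \<partial>\<mu>)"

definition Fdom :: "('a \<times> 'b) measure \<Rightarrow> 'a measure \<Rightarrow> 'b measure \<Rightarrow> ('b \<Rightarrow> real) \<Rightarrow> bool" where
  "Fdom R \<mu> \<nu> \<phi> \<longleftrightarrow> \<phi> \<in> borel_measurable \<nu> \<and> phi_plus_wd R \<mu> \<phi>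
      \<and> integrable \<mu> (phi_plus R \<mu> \<phi>)"

definition Fstar :: "('a \<times> 'b) measure \<Rightarrow> 'a measure \<Rightarrow> 'b measure \<Rightarrow> 'b measure \<Rightarrow> ereal" where
  "Fstar R \<mu> \<nu> \<rho> = (SUP \<phi> \<in> {\<phi>. Fdom R \<mu> \<nu> \<phi> \<and> integrable \<rho> \<phi>}.
       ereal ((\<integral>y. \<phi> y \<partial>\<rho>) - Ffun R \<mu> \<phi>))"

definition Fderiv :: "('a \<times> 'b) measure \<Rightarrow> 'a measure \<Rightarrow> 'b measure \<Rightarrow> ('b \<Rightarrow> real) \<Rightarrow> 'b measure" where
  "Fderiv R \<mu> \<nu> \<phi> =
     distr (density R (\<lambda>(x,y). ennreal (exp (\<phi> y - phi_plus R \<mu> \<phi> x)))) \<nu> snd"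

text \<open>(F^*)' inverts F'.\<close>
definition Fstar_deriv :: "('a \<times> 'b) measure \<Rightarrow> 'a measure \<Rightarrow> 'b measure \<Rightarrow> 'b measure \<Rightarrow> 'b \<Rightarrow> real" where
  "Fstar_deriv R \<mu> \<nu> \<rho> =
     (SOME \<phi>. Fdom R \<mu> \<nu> \<phi> \<and> integrable \<rho> \<phi> \<and> Fderiv R \<mu> \<nu> \<phi> = \<rho>)"

end

theory Submission
  imports Defs
begin

text \<open>
  Let \<open>\<phi> = (F\<^sup>*)'(\<rho>)\<close>, so \<open>F'(\<phi>) = \<rho>\<close>, and let \<open>P\<^sub>\<phi>\<close> be the coupling
  \<open>e\<^bsup>\<phi>(y) - \<phi>\<^sup>+(x)\<^esup> R(dx,dy)\<close>, whose marginals are \<open>\<mu>\<close> and \<open>\<rho>\<close>. The density of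
  \<open>P\<^sub>\<psi>\<close> with respect to \<open>P\<^sub>\<phi>\<close> integrates to 1, so by Jensen \<open>\<phi>\<close> maximises
  \<open>\<langle>\<psi>,\<rho>\<rangle> - F(\<psi>)\<close>; hence \<open>F\<^sup>*(\<rho>'|\<rho>) = F\<^sup>*(\<rho>') - \<langle>\<phi>,\<rho>'\<rangle> + F(\<phi>)\<close>,
  while \<open>H\<^sub>\<nu>(\<rho>'|\<rho>) = H(\<rho>'|\<rho>)\<close>.

  For bounded \<open>g\<close> one has \<open>(\<phi> + g)\<^sup>+ = \<phi>\<^sup>+ + ln k\<close>, where \<open>k(x)\<close> is the conditional
  expectation of \<open>e\<^sup>g\<close> given \<open>x\<close> under \<open>P\<^sub>\<phi>\<close>. Jensen again gives
  \<open>F(\<phi> + g) \<le> F(\<phi>) + ln \<integral>e\<^sup>g d\<rho>\<close>, so testing \<open>F\<^sup>*(\<rho>')\<close> with \<open>\<phi> + g\<close> yields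
  \<open>\<integral>g d\<rho>' - ln \<integral>e\<^sup>g d\<rho> \<le> F\<^sup>*(\<rho>'|\<rho>)\<close>. By the Donsker--Varadhan principle the
  supremum of the left-hand side over bounded \<open>g\<close> dominates \<open>H(\<rho>'|\<rho>)\<close>: testing it with
  truncations of \<open>ln (d\<rho>'/d\<rho>)\<close> at \<open>\<plusminus>m\<close> and letting \<open>m \<rightarrow> \<infinity>\<close> proves this, and in particular
  that \<open>ln (d\<rho>'/d\<rho>)\<close> is \<open>\<rho>'\<close>-integrable.
\<close>

lemma mult_neg_part_ln_le_one:
  fixes x :: real
  assumes "0 \<le> x"
  shows "x * max 0 (- ln x) \<le> 1"
proof (cases "0 < x \<and> x < 1")
  case True
  have "- ln x = ln (1 / x)" using True by (simp add: ln_div)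
  also have "\<dots> \<le> 1 / x - 1" using True by (intro ln_le_minus_one) simp
  finally have "x * (- ln x) \<le> x * (1 / x - 1)" using True by (intro mult_left_mono) auto
  also have "\<dots> = 1 - x" using True by (simp add: field_simps)
  finally show ?thesis using True by (simp add: max_def)
qed (use assms in \<open>auto simp: max_def\<close>)

lemma AE_le_of_set_nn_integral_le:
  assumes [measurable]: "f \<in> borel_measurable M" "g \<in> borel_measurable M"
    and g_finite: "(\<integral>\<^sup>+x. g x \<partial>M) \<noteq> \<infinity>"
    and le: "\<And>A. A \<in> sets M \<Longrightarrow> (\<integral>\<^sup>+x. f x * indicator A x \<partial>M) \<le> (\<integral>\<^sup>+x. g x * indicator A x \<partial>M)"
  shows "AE x in M. f x \<le> g x"
proof (rule ccontr)
  assume not_le: "\<not> (AE x in M. f x \<le> g x)"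
  define B where "B = {x\<in>space M. g x < f x}"
  have [measurable]: "B \<in> sets M" unfolding B_def by measurable
  have "(\<integral>\<^sup>+x. g x * indicator B x \<partial>M) < (\<integral>\<^sup>+x. f x * indicator B x \<partial>M)"
  proof (rule nn_integral_less)
    have "(\<integral>\<^sup>+x. g x * indicator B x \<partial>M) \<le> (\<integral>\<^sup>+x. g x \<partial>M)"
      by (intro nn_integral_mono) (simp add: indicator_def)
    with g_finite show "(\<integral>\<^sup>+x. g x * indicator B x \<partial>M) \<noteq> \<infinity>"
      by (auto simp: top_unique)
    show "AE x in M. g x * indicator B x \<le> f x * indicator B x"
      by (auto simp: B_def indicator_def less_imp_le)
    show "\<not> (AE x in M. f x * indicator B x \<le> g x * indicator B x)"
    proof
      assume "AE x in M. f x * indicator B x \<le> g x * indicator B x"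
      then have "AE x in M. f x \<le> g x"
        using AE_space
      proof eventually_elim
        case (elim x)
        then show ?case by (cases "g x < f x") (auto simp: B_def)
      qed
      with not_le show False by simp
    qed
  qed auto
  with le[of B] show False by simp
qed

lemma (in prob_space) integral_ln_le_ln_integral:
  fixes f :: "'a \<Rightarrow> real"
  assumes "integrable M f" "AE x in M. 0 < f x" "integrable M (\<lambda>x. ln (f x))"
  shows "(\<integral>x. ln (f x) \<partial>M) \<le> ln (\<integral>x. f x \<partial>M)"
proof -
  have neg_ln_convex: "convex_on {0<..} (\<lambda>x. - ln x)"
    using ln_concave by (simp add: concave_on_def)
  have "- ln (\<integral>x. f x \<partial>M) \<le> (\<integral>x. - ln (f x) \<partial>M)"
    by (rule jensens_inequality[where I="{0<..}" and a=0 and q="\<lambda>x. - ln x"])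
      (use assms neg_ln_convex in auto)
  then show ?thesis by simp
qed

lemma (in finite_measure) integrable_max_0_of_bounded_truncations:
  fixes u :: "'a \<Rightarrow> real"
  assumes [measurable]: "u \<in> borel_measurable M"
    and bound: "\<And>m. (\<integral>x. min (real m) (max 0 (u x)) \<partial>M) \<le> b m" and "b \<longlonglongrightarrow> l"
  shows "integrable M (\<lambda>x. max 0 (u x))" "(\<integral>x. max 0 (u x) \<partial>M) \<le> l"
proof -
  define a where "a m x = min (real m) (max 0 (u x))" for m :: nat and x
  have [measurable]: "a m \<in> borel_measurable M" for m
    unfolding a_def by measurable
  have a_integrable: "integrable M (a m)" for m
    by (rule integrable_const_bound[where B="real m"]) (auto simp: a_def)
  have a_incseq: "incseq (\<lambda>m. \<integral>x. a m x \<partial>M)"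
    by (intro incseq_SucI integral_mono a_integrable) (auto simp: a_def)
  obtain K where "\<And>m. b m \<le> K"
    using BseqE[OF convergent_imp_Bseq[OF convergentI[OF \<open>b \<longlonglongrightarrow> l\<close>]]]
    by (metis abs_le_D1 real_norm_def)
  with bound have "\<forall>m. (\<integral>x. a m x \<partial>M) \<le> K"
    unfolding a_def by (blast intro: order_trans)
  then obtain L where L: "(\<lambda>m. \<integral>x. a m x \<partial>M) \<longlonglongrightarrow> L"
    using incseq_convergent[OF a_incseq] by blast
  have a_tendsto: "(\<lambda>m. a m x) \<longlonglongrightarrow> max 0 (u x)" for x
  proof (rule tendsto_eventually)
    show "\<forall>\<^sub>F m in sequentially. a m x = max 0 (u x)"
      unfolding eventually_sequentially a_def
      by (rule exI[of _ "nat \<lceil>max 0 (u x)\<rceil>"]) linarith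
  qed
  have a_mono: "AE x in M. mono (\<lambda>m. a m x)"
    by (auto simp: a_def mono_def)
  have a_nonneg: "AE x in M. 0 \<le> a m x" for m
    by (auto simp: a_def)
  note convergence = integral_monotone_convergence_nonneg[OF a_integrable a_mono a_nonneg _ L]
  have "integrable M (\<lambda>x. max 0 (u x))" "(\<integral>x. max 0 (u x) \<partial>M) = L"
    using a_tendsto by (auto intro!: convergence)
  moreover have "L \<le> l"
    by (rule LIMSEQ_le[OF L \<open>b \<longlonglongrightarrow> l\<close>]) (use bound in \<open>auto simp: a_def\<close>)
  ultimately show "integrable M (\<lambda>x. max 0 (u x))" "(\<integral>x. max 0 (u x) \<partial>M) \<le> l"
    by simp_all
qed

lemma emeasure_distr_density_bounds:
  fixes a b :: ennreal
  assumes [measurable]: "f \<in> measurable P M" "h \<in> borel_measurable P"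
    and marginal: "distr P M f = M"
    and bounds: "\<And>z. z \<in> space P \<Longrightarrow> a \<le> h z \<and> h z \<le> b"
    and A: "A \<in> sets M"
  shows "a * emeasure M A \<le> emeasure (distr (density P h) M f) A"
    and "emeasure (distr (density P h) M f) A \<le> b * emeasure M A"
proof -
  let ?B = "f -` A \<inter> space P"
  have [measurable]: "?B \<in> sets P"
    using A by measurable
  have "f \<in> measurable (density P h) M"
    by simp
  then have distr_eq: "emeasure (distr (density P h) M f) A = (\<integral>\<^sup>+z. h z * indicator ?B z \<partial>P)"
    using A by (simp add: emeasure_distr emeasure_density)
  have "emeasure M A = emeasure P ?B"
    using A by (subst marginal[symmetric]) (simp add: emeasure_distr)
  then have scaled: "c * emeasure M A = (\<integral>\<^sup>+z. c * indicator ?B z \<partial>P)" for c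
    by (simp add: nn_integral_cmult_indicator)
  show "a * emeasure M A \<le> emeasure (distr (density P h) M f) A"
    unfolding distr_eq scaled
    by (intro nn_integral_mono) (auto simp: bounds indicator_def)
  show "emeasure (distr (density P h) M f) A \<le> b * emeasure M A"
    unfolding distr_eq scaled
    by (intro nn_integral_mono) (auto simp: bounds indicator_def)
qed

lemma (in finite_measure) obtain_bounded_density:
  fixes a b :: real
  assumes sets_eq: "sets N = sets M" and "0 \<le> b"
    and lower: "\<And>A. A \<in> sets M \<Longrightarrow> ennreal a * emeasure M A \<le> emeasure N A"
    and upper: "\<And>A. A \<in> sets M \<Longrightarrow> emeasure N A \<le> ennreal b * emeasure M A"
  obtains k where "k \<in> borel_measurable M" "N = density M (\<lambda>x. ennreal (k x))"
    "AE x in M. a \<le> k x \<and> k x \<le> b"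
proof -
  have "absolutely_continuous M N"
    unfolding absolutely_continuous_def
  proof
    fix A assume "A \<in> null_sets M"
    with upper[of A] sets_eq show "A \<in> null_sets N"
      by (auto simp: null_sets_def)
  qed
  then have N: "N = density M (RN_deriv M N)"
    using density_RN_deriv[OF _ sets_eq] by simp
  have set_integral: "emeasure N A = (\<integral>\<^sup>+x. RN_deriv M N x * indicator A x \<partial>M)" if "A \<in> sets M" for A
    using that by (subst N) (simp add: emeasure_density)
  have const_integral: "ennreal c * emeasure M A = (\<integral>\<^sup>+x. ennreal c * indicator A x \<partial>M)"
    if "A \<in> sets M" for A c
    using that by (simp add: nn_integral_cmult_indicator)
  have "(\<integral>\<^sup>+x. ennreal b \<partial>M) \<noteq> \<infinity>"
    by (simp add: ennreal_mult_eq_top_iff)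
  then have le_b: "AE x in M. RN_deriv M N x \<le> ennreal b"
    by (intro AE_le_of_set_nn_integral_le)
       (simp_all add: upper set_integral[symmetric] const_integral[symmetric])
  have "(\<integral>\<^sup>+x. RN_deriv M N x \<partial>M) \<noteq> \<infinity>"
    using nn_integral_mono_AE[OF le_b] \<open>(\<integral>\<^sup>+x. ennreal b \<partial>M) \<noteq> \<infinity>\<close>
    by (auto simp: top_unique)
  then have ge_a: "AE x in M. ennreal a \<le> RN_deriv M N x"
    by (intro AE_le_of_set_nn_integral_le)
       (simp_all add: lower set_integral[symmetric] const_integral[symmetric])
  show ?thesis
  proof
    show "(\<lambda>x. enn2real (RN_deriv M N x)) \<in> borel_measurable M"
      by simp
    have "AE x in M. RN_deriv M N x = ennreal (enn2real (RN_deriv M N x))"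
      using le_b by eventually_elim (auto simp: ennreal_enn2real_if top_unique)
    then show "N = density M (\<lambda>x. ennreal (enn2real (RN_deriv M N x)))"
      by (subst N) (intro density_cong; simp)
    show "AE x in M. a \<le> enn2real (RN_deriv M N x) \<and> enn2real (RN_deriv M N x) \<le> b"
      using le_b ge_a
    proof eventually_elim
      case (elim x)
      then obtain r where "RN_deriv M N x = ennreal r" "0 \<le> r"
        by (cases "RN_deriv M N x" rule: ennreal_cases) (auto simp: top_unique)
      with elim show ?case
        by (simp add: ennreal_le_iff \<open>0 \<le> b\<close>)
    qed
  qed
qed

section \<open>The Donsker--Varadhan lower bound\<close>

lemma (in sigma_finite_measure) density_enn2real_RN_deriv:
  assumes "sigma_finite_measure N" "absolutely_continuous M N" "sets N = sets M"
  shows "density M (\<lambda>x. ennreal (enn2real (RN_deriv M N x))) = N"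
proof -
  have "density M (\<lambda>x. ennreal (enn2real (RN_deriv M N x))) = density M (RN_deriv M N)"
    using RN_deriv_finite[OF assms]
    by (intro density_cong) (auto elim!: eventually_mono simp: ennreal_enn2real_if)
  also have "\<dots> = N"
    using density_RN_deriv[OF assms(2,3)] .
  finally show ?thesis .
qed

lemma absolutely_continuous_of_variational_bound:
  fixes t :: real
  assumes "prob_space \<rho>" "prob_space \<rho>'" and sets_eq: "sets \<rho>' = sets \<rho>"
    and bound: "\<And>g c. g \<in> borel_measurable \<rho> \<Longrightarrow> (\<And>y. \<bar>g y\<bar> \<le> c) \<Longrightarrow>
      (\<integral>y. g y \<partial>\<rho>') - ln (\<integral>y. exp (g y) \<partial>\<rho>) \<le> t"
  shows "absolutely_continuous \<rho> \<rho>'"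
  unfolding absolutely_continuous_def
proof
  interpret \<rho>: prob_space \<rho> by fact
  interpret \<rho>': prob_space \<rho>' by fact
  fix A assume A: "A \<in> null_sets \<rho>"
  then have [measurable]: "A \<in> sets \<rho>" by blast
  show "A \<in> null_sets \<rho>'"
  proof (rule ccontr)
    assume "A \<notin> null_sets \<rho>'"
    then have pos: "0 < measure \<rho>' A"
      using sets_eq by (simp add: \<rho>'.emeasure_eq_measure null_sets_def zero_less_measure_iff)
    \<comment> \<open>Test the bound with \<open>n\<close> times the indicator of \<open>A\<close>: its exponential moment under \<open>\<rho>\<close> is 1.\<close>
    obtain n :: nat where n: "t < real n * measure \<rho>' A"
      using reals_Archimedean3[OF pos] by blast
    have "AE y in \<rho>. exp (real n * indicator A y) = 1"
      using AE_not_in[OF A] by eventually_elim simp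
    then have exp_moment: "(\<integral>y. exp (real n * indicator A y) \<partial>\<rho>) = 1"
      by (simp add: integral_cong_AE[where g="\<lambda>_. 1"] \<rho>.prob_space)
    have "A \<in> sets \<rho>'"
      using sets_eq by simp
    then have mean: "(\<integral>y. real n * indicator A y \<partial>\<rho>') = real n * measure \<rho>' A"
      by simp
    have "(\<integral>y. real n * indicator A y \<partial>\<rho>') - ln (\<integral>y. exp (real n * indicator A y) \<partial>\<rho>) \<le> t"
      by (rule bound[where c="real n"]) (auto simp: indicator_def)
    then have "real n * measure \<rho>' A - ln 1 \<le> t"
      unfolding mean exp_moment .
    then show False
      using n by simp
  qed
qed

text \<open>
  Where \<open>q = 0\<close> it is set to \<open>-m\<close>
  explicitly, since Isabelle's \<open>ln 0 = 0\<close> would give the wrong value \<open>-ln p\<close>.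
\<close>
definition trunc_log_ratio :: "nat \<Rightarrow> real \<Rightarrow> real \<Rightarrow> real" where
  "trunc_log_ratio m q p =
     (if q = 0 then - real m else max (- real m) (min (real m) (ln q - ln p)))"

lemma abs_trunc_log_ratio_le: "\<bar>trunc_log_ratio m q p\<bar> \<le> real m"
  by (auto simp: trunc_log_ratio_def)

lemma mult_exp_trunc_log_ratio_le:
  assumes "0 < p" "0 \<le> q"
  shows "p * exp (trunc_log_ratio m q p) \<le> q + exp (- real m) * p"
proof (cases "q = 0")
  case False
  have "exp (trunc_log_ratio m q p) \<le> exp (- real m) + exp (ln q - ln p)"
    using False by (auto simp: trunc_log_ratio_def max_def min_def add_increasing add_increasing2)
  also have "exp (ln q - ln p) = q / p"
    using assms False by (simp add: exp_diff)
  finally show ?thesis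
    using assms by (simp add: field_simps mult_left_mono)
qed (simp add: trunc_log_ratio_def)

lemma trunc_log_ratio_ge:
  assumes "0 < q"
  shows "min (real m) (max 0 (ln q - ln p)) - max 0 (ln p - ln q) \<le> trunc_log_ratio m q p"
  using assms by (auto simp: trunc_log_ratio_def)

lemma prob_space_densityD:
  fixes p :: "'b \<Rightarrow> real"
  assumes "prob_space (density \<nu> (\<lambda>y. ennreal (p y)))"
    and [measurable]: "p \<in> borel_measurable \<nu>" and nonneg: "\<And>y. 0 \<le> p y"
  shows "integrable \<nu> p" "(\<integral>y. p y \<partial>\<nu>) = 1"
proof -
  interpret prob_space "density \<nu> (\<lambda>y. ennreal (p y))" by fact
  show "integrable \<nu> p"
    using integrable_density[of "\<lambda>_. 1 :: real" \<nu> p] nonneg by simp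
  show "(\<integral>y. p y \<partial>\<nu>) = 1"
    using integral_density[of "\<lambda>_. 1 :: real" \<nu> p] nonneg prob_space by simp
qed

lemma integral_exp_trunc_log_ratio_le:
  fixes p q :: "'b \<Rightarrow> real"
  assumes [measurable]: "p \<in> borel_measurable \<nu>" "q \<in> borel_measurable \<nu>"
    and nonneg: "\<And>y. 0 \<le> q y" and p_pos: "AE y in \<nu>. 0 < p y"
    and integrable: "integrable \<nu> p" "integrable \<nu> q"
    and normalized: "(\<integral>y. p y \<partial>\<nu>) = 1" "(\<integral>y. q y \<partial>\<nu>) = 1"
  shows "(\<integral>y. p y * exp (trunc_log_ratio m (q y) (p y)) \<partial>\<nu>) \<le> 1 + exp (- real m)"
proof -
  have "(\<integral>y. p y * exp (trunc_log_ratio m (q y) (p y)) \<partial>\<nu>) \<le> (\<integral>y. q y + exp (- real m) * p y \<partial>\<nu>)"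
  proof (rule integral_mono_AE)
    have dominated: "AE y in \<nu>. norm (p y * exp (trunc_log_ratio m (q y) (p y))) \<le> norm (exp (real m) * p y)"
      using p_pos
    proof eventually_elim
      case (elim y)
      have "exp (trunc_log_ratio m (q y) (p y)) \<le> exp (real m)"
        using abs_trunc_log_ratio_le[of m "q y" "p y"] by simp
      with elim show ?case
        by (simp add: mult.commute mult_left_mono)
    qed
    show "integrable \<nu> (\<lambda>y. p y * exp (trunc_log_ratio m (q y) (p y)))"
      by (rule Bochner_Integration.integrable_bound[OF _ _ dominated]) (simp_all add: integrable(1) trunc_log_ratio_def)
    show "AE y in \<nu>. p y * exp (trunc_log_ratio m (q y) (p y)) \<le> q y + exp (- real m) * p y"
      using p_pos by eventually_elim (simp add: mult_exp_trunc_log_ratio_le nonneg)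
  qed (use integrable in auto)
  also have "\<dots> = 1 + exp (- real m)"
    using integrable normalized by simp
  finally show ?thesis .
qed

lemma integral_trunc_log_ratio_le:
  fixes p q :: "'b \<Rightarrow> real" and t :: real
  assumes [measurable]: "p \<in> borel_measurable \<nu>" "q \<in> borel_measurable \<nu>"
    and nonneg: "\<And>y. 0 \<le> p y" "\<And>y. 0 \<le> q y" and p_pos: "AE y in \<nu>. 0 < p y"
    and \<rho>: "\<rho> = density \<nu> (\<lambda>y. ennreal (p y))" "prob_space \<rho>"
    and \<rho>': "\<rho>' = density \<nu> (\<lambda>y. ennreal (q y))" "prob_space \<rho>'"
    and bound: "\<And>g c. g \<in> borel_measurable \<nu> \<Longrightarrow> (\<And>y. \<bar>g y\<bar> \<le> c) \<Longrightarrow>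
      (\<integral>y. g y \<partial>\<rho>') - ln (\<integral>y. exp (g y) \<partial>\<rho>) \<le> t"
  shows "(\<integral>y. trunc_log_ratio m (q y) (p y) \<partial>\<rho>') \<le> t + exp (- real m)"
proof -
  interpret \<rho>: prob_space \<rho> by fact
  define h where "h y = trunc_log_ratio m (q y) (p y)" for y
  have [measurable]: "h \<in> borel_measurable \<nu>"
    unfolding h_def trunc_log_ratio_def by measurable
  have h_abs: "\<bar>h y\<bar> \<le> real m" for y
    unfolding h_def by (rule abs_trunc_log_ratio_le)
  have h_bound: "- real m \<le> h y" "h y \<le> real m" for y
    using h_abs[of y] by linarith+
  have "(\<integral>y. exp (h y) \<partial>\<rho>) = (\<integral>y. p y * exp (h y) \<partial>\<nu>)"
    unfolding \<rho>(1) by (simp add: integral_density nonneg)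
  also have "\<dots> \<le> 1 + exp (- real m)"
    unfolding h_def using prob_space_densityD[OF \<rho>(2)[unfolded \<rho>(1)]] prob_space_densityD[OF \<rho>'(2)[unfolded \<rho>'(1)]]
    by (intro integral_exp_trunc_log_ratio_le) (simp_all add: nonneg p_pos)
  finally have exp_moment_le: "(\<integral>y. exp (h y) \<partial>\<rho>) \<le> 1 + exp (- real m)" .
  have "integrable \<rho> (\<lambda>y. exp (h y))"
    by (rule \<rho>.integrable_const_bound[where B="exp (real m)"]) (auto simp: \<rho> h_bound)
  then have "(\<integral>y. exp (- real m) \<partial>\<rho>) \<le> (\<integral>y. exp (h y) \<partial>\<rho>)"
    by (rule integral_mono[rotated]) (auto simp: h_bound)
  then have "exp (- real m) \<le> (\<integral>y. exp (h y) \<partial>\<rho>)"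
    by (simp add: \<rho>.prob_space)
  then have "ln (\<integral>y. exp (h y) \<partial>\<rho>) \<le> ln (1 + exp (- real m))"
    using exp_moment_le by (subst ln_le_cancel_iff) (auto intro: less_le_trans[OF exp_gt_zero] add_pos_pos)
  also have "\<dots> \<le> exp (- real m)"
    by (rule ln_add_one_self_le_self) simp
  finally have "ln (\<integral>y. exp (h y) \<partial>\<rho>) \<le> exp (- real m)" .
  moreover have "(\<integral>y. h y \<partial>\<rho>') - ln (\<integral>y. exp (h y) \<partial>\<rho>) \<le> t"
    by (rule bound[OF _ h_abs]) simp
  ultimately show ?thesis
    unfolding h_def by linarith
qed

lemma integrable_neg_part_log_ratio:
  fixes p q :: "'b \<Rightarrow> real"
  assumes "finite_measure \<nu>" and [measurable]: "p \<in> borel_measurable \<nu>" "q \<in> borel_measurable \<nu>"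
    and nonneg: "\<And>y. 0 \<le> q y" and \<rho>': "\<rho>' = density \<nu> (\<lambda>y. ennreal (q y))"
    and ln_p_integrable: "integrable \<rho>' (\<lambda>y. ln (p y))"
  shows "integrable \<rho>' (\<lambda>y. max 0 (ln (p y) - ln (q y)))"
proof -
  interpret \<nu>: finite_measure \<nu> by fact
  have "integrable \<nu> (\<lambda>y. q y * max 0 (- ln (q y)))"
    by (rule \<nu>.integrable_const_bound[where B=1]) (auto simp: mult_neg_part_ln_le_one nonneg)
  then have "integrable \<rho>' (\<lambda>y. max 0 (- ln (q y)))"
    unfolding \<rho>' by (simp add: integrable_density nonneg)
  then show ?thesis
    by (rule Bochner_Integration.integrable_bound[OF Bochner_Integration.integrable_add[OF integrable_abs[OF ln_p_integrable]]])
       (auto simp: \<rho>' measurable_cong_sets[OF sets_density refl])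
qed

lemma log_ratio_integrable_and_integral_le:
  fixes p q :: "'b \<Rightarrow> real" and t :: real
  assumes "finite_measure \<nu>"
    and [measurable]: "p \<in> borel_measurable \<nu>" "q \<in> borel_measurable \<nu>"
    and nonneg: "\<And>y. 0 \<le> p y" "\<And>y. 0 \<le> q y" and p_pos: "AE y in \<nu>. 0 < p y"
    and \<rho>: "\<rho> = density \<nu> (\<lambda>y. ennreal (p y))" "prob_space \<rho>"
    and \<rho>': "\<rho>' = density \<nu> (\<lambda>y. ennreal (q y))" "prob_space \<rho>'"
    and ln_p_integrable: "integrable \<rho>' (\<lambda>y. ln (p y))"
    and bound: "\<And>g c. g \<in> borel_measurable \<nu> \<Longrightarrow> (\<And>y. \<bar>g y\<bar> \<le> c) \<Longrightarrow>
      (\<integral>y. g y \<partial>\<rho>') - ln (\<integral>y. exp (g y) \<partial>\<rho>) \<le> t"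
  shows "integrable \<rho>' (\<lambda>y. ln (q y) - ln (p y))" "(\<integral>y. ln (q y) - ln (p y) \<partial>\<rho>') \<le> t"
proof -
  interpret \<rho>': prob_space \<rho>' by fact
  have sets_\<rho>'[measurable_cong]: "sets \<rho>' = sets \<nu>"
    unfolding \<rho>' by simp
  define u where "u y = ln (q y) - ln (p y)" for y
  have [measurable]: "u \<in> borel_measurable \<nu>"
    unfolding u_def by measurable
  have neg_part_integrable: "integrable \<rho>' (\<lambda>y. max 0 (- u y))"
    using integrable_neg_part_log_ratio[OF assms(1-3) nonneg(2) \<rho>'(1) ln_p_integrable] by (simp add: u_def)
  have truncations_bounded:
    "(\<integral>y. min (real m) (max 0 (u y)) \<partial>\<rho>') \<le> t + exp (- real m) + (\<integral>y. max 0 (- u y) \<partial>\<rho>')"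
    for m
  proof -
    have "(\<integral>y. min (real m) (max 0 (u y)) \<partial>\<rho>') - (\<integral>y. max 0 (- u y) \<partial>\<rho>')
        = (\<integral>y. min (real m) (max 0 (u y)) - max 0 (- u y) \<partial>\<rho>')"
      using neg_part_integrable
      by (simp add: \<rho>'.integrable_const_bound[where B="real m"])
    also have "\<dots> \<le> (\<integral>y. trunc_log_ratio m (q y) (p y) \<partial>\<rho>')"
    proof (rule integral_mono_AE)
      show "AE y in \<rho>'. min (real m) (max 0 (u y)) - max 0 (- u y) \<le> trunc_log_ratio m (q y) (p y)"
        unfolding \<rho>' using AE_density[of "\<lambda>y. ennreal (q y)" \<nu>]
        by (simp add: u_def trunc_log_ratio_ge)
      show "integrable \<rho>' (\<lambda>y. trunc_log_ratio m (q y) (p y))"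
        by (rule \<rho>'.integrable_const_bound[where B="real m"])
           (auto simp: abs_trunc_log_ratio_le trunc_log_ratio_def)
    qed (use neg_part_integrable in \<open>simp add: \<rho>'.integrable_const_bound[where B="real m"]\<close>)
    also have "\<dots> \<le> t + exp (- real m)"
      by (rule integral_trunc_log_ratio_le[OF _ _ nonneg p_pos \<rho> \<rho>' bound]) simp_all
    finally show ?thesis
      by simp
  qed
  have bounds_tendsto: "(\<lambda>m. t + exp (- real m) + (\<integral>y. max 0 (- u y) \<partial>\<rho>'))
      \<longlonglongrightarrow> t + 0 + (\<integral>y. max 0 (- u y) \<partial>\<rho>')"
    by (intro tendsto_intros filterlim_compose[OF exp_at_bot])
       (simp add: filterlim_uminus_at_bot filterlim_real_sequentially)
  have "u \<in> borel_measurable \<rho>'"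
    by measurable
  from \<rho>'.integrable_max_0_of_bounded_truncations[OF this truncations_bounded bounds_tendsto]
  have pos_part: "integrable \<rho>' (\<lambda>y. max 0 (u y))"
    "(\<integral>y. max 0 (u y) \<partial>\<rho>') \<le> t + (\<integral>y. max 0 (- u y) \<partial>\<rho>')"
    by simp_all
  have u_split: "u = (\<lambda>y. max 0 (u y) - max 0 (- u y))"
    by (auto simp: fun_eq_iff)
  have "integrable \<rho>' u"
    by (subst u_split) (use pos_part neg_part_integrable in simp)
  moreover have "(\<integral>y. u y \<partial>\<rho>') \<le> t"
    by (subst u_split) (use pos_part neg_part_integrable in simp)
  ultimately show "integrable \<rho>' (\<lambda>y. ln (q y) - ln (p y))"
    "(\<integral>y. ln (q y) - ln (p y) \<partial>\<rho>') \<le> t"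
    unfolding u_def by simp_all
qed

lemma rel_entropy_minus_le_of_real_variational_bound:
  fixes \<nu> \<rho> \<rho>' :: "'b measure" and t :: real
  assumes "prob_space \<nu>" "prob_space \<rho>" "sets \<rho> = sets \<nu>" "prob_space \<rho>'" "sets \<rho>' = sets \<nu>"
    and ac: "absolutely_continuous \<nu> \<rho>" and pos: "AE y in \<nu>. 0 < RN_deriv \<nu> \<rho> y"
    and ln_p_integrable: "integrable \<rho>' (\<lambda>y. ln (enn2real (RN_deriv \<nu> \<rho> y)))"
    and bound: "\<And>g c. g \<in> borel_measurable \<nu> \<Longrightarrow> (\<And>y. \<bar>g y\<bar> \<le> c) \<Longrightarrow>
      (\<integral>y. g y \<partial>\<rho>') - ln (\<integral>y. exp (g y) \<partial>\<rho>) \<le> t"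
  shows "rel_entropy \<nu> \<rho>' - ereal (\<integral>y. ln (enn2real (RN_deriv \<nu> \<rho> y)) \<partial>\<rho>') \<le> t"
proof -
  interpret \<nu>: prob_space \<nu> by fact
  interpret \<rho>: prob_space \<rho> by fact
  interpret \<rho>': prob_space \<rho>' by fact
  have "absolutely_continuous \<rho> \<rho>'"
    using assms(2-5) bound
    by (intro absolutely_continuous_of_variational_bound) (auto cong: measurable_cong_sets)
  with ac have ac': "absolutely_continuous \<nu> \<rho>'"
    by (auto simp: absolutely_continuous_def)
  define p where "p y = enn2real (RN_deriv \<nu> \<rho> y)" for y
  define q where "q y = enn2real (RN_deriv \<nu> \<rho>' y)" for y
  have \<rho>_density: "\<rho> = density \<nu> (\<lambda>y. ennreal (p y))"
    unfolding p_def using \<nu>.density_enn2real_RN_deriv[OF \<rho>.sigma_finite_measure_axioms ac assms(3)] ..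
  have \<rho>'_density: "\<rho>' = density \<nu> (\<lambda>y. ennreal (q y))"
    unfolding q_def using \<nu>.density_enn2real_RN_deriv[OF \<rho>'.sigma_finite_measure_axioms ac' assms(5)] ..
  have p_q_measurable: "p \<in> borel_measurable \<nu>" "q \<in> borel_measurable \<nu>"
    unfolding p_def q_def by simp_all
  have nonneg: "0 \<le> p y" "0 \<le> q y" for y
    by (simp_all add: p_def q_def)
  have p_pos: "AE y in \<nu>. 0 < p y"
    using pos \<nu>.RN_deriv_finite[OF \<rho>.sigma_finite_measure_axioms ac assms(3)]
    by eventually_elim (auto simp: p_def enn2real_positive_iff top.not_eq_extremum)
  have ln_p_integrable': "integrable \<rho>' (\<lambda>y. ln (p y))"
    using ln_p_integrable by (simp add: p_def)
  have log_ratio: "integrable \<rho>' (\<lambda>y. ln (q y) - ln (p y))" "(\<integral>y. ln (q y) - ln (p y) \<partial>\<rho>') \<le> t"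
    using log_ratio_integrable_and_integral_le[OF \<nu>.finite_measure_axioms p_q_measurable nonneg
        p_pos \<rho>_density \<rho>.prob_space_axioms \<rho>'_density \<rho>'.prob_space_axioms ln_p_integrable'] bound
    by blast+
  have ln_q_integrable: "integrable \<rho>' (\<lambda>y. ln (q y))"
    using Bochner_Integration.integrable_add[OF log_ratio(1) ln_p_integrable'] by simp
  then have "rel_entropy \<nu> \<rho>' = ereal (\<integral>y. ln (q y) \<partial>\<rho>')"
    using ac' by (simp add: rel_entropy_def q_def)
  moreover have "(\<integral>y. ln (q y) - ln (p y) \<partial>\<rho>') = (\<integral>y. ln (q y) \<partial>\<rho>') - (\<integral>y. ln (p y) \<partial>\<rho>')"
    using ln_q_integrable ln_p_integrable' by simp
  ultimately show ?thesis
    using log_ratio(2) by (simp add: p_def)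
qed

lemma rel_entropy_minus_le_of_variational_bound:
  fixes \<nu> \<rho> \<rho>' :: "'b measure" and T :: ereal
  assumes "prob_space \<nu>" "prob_space \<rho>" "sets \<rho> = sets \<nu>" "prob_space \<rho>'" "sets \<rho>' = sets \<nu>"
    and "absolutely_continuous \<nu> \<rho>" "AE y in \<nu>. 0 < RN_deriv \<nu> \<rho> y"
    and "integrable \<rho>' (\<lambda>y. ln (enn2real (RN_deriv \<nu> \<rho> y)))"
    and bound: "\<And>g c. g \<in> borel_measurable \<nu> \<Longrightarrow> (\<And>y. \<bar>g y\<bar> \<le> c) \<Longrightarrow>
      ereal ((\<integral>y. g y \<partial>\<rho>') - ln (\<integral>y. exp (g y) \<partial>\<rho>)) \<le> T"
  shows "rel_entropy \<nu> \<rho>' - ereal (\<integral>y. ln (enn2real (RN_deriv \<nu> \<rho> y)) \<partial>\<rho>') \<le> T"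
proof -
  have "ereal 0 \<le> T"
    using bound[of "\<lambda>_. 0" 0] prob_space.prob_space[OF assms(2)] by simp
  then consider "T = \<infinity>" | t where "T = ereal t"
    by (cases T) auto
  then show ?thesis
  proof cases
    case (2 t)
    have bound_t: "(\<integral>y. g y \<partial>\<rho>') - ln (\<integral>y. exp (g y) \<partial>\<rho>) \<le> t"
      if "g \<in> borel_measurable \<nu>" "\<And>y. \<bar>g y\<bar> \<le> c" for g c
      using bound[OF that] 2 by simp
    show ?thesis
      unfolding 2 using rel_entropy_minus_le_of_real_variational_bound[OF assms(1-8)] bound_t by blast
  qed simp
qed

lemma integrable_rel_entropy_deriv_iff:
  assumes "finite_measure \<rho>'"
  shows "integrable \<rho>' (rel_entropy_deriv \<nu> \<rho>) \<longleftrightarrow> integrable \<rho>' (\<lambda>y. ln (enn2real (RN_deriv \<nu> \<rho> y)))"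
proof -
  interpret \<rho>': finite_measure \<rho>' by fact
  have "integrable \<rho>' (\<lambda>y. f y + 1) \<longleftrightarrow> integrable \<rho>' f" for f :: "'a \<Rightarrow> real"
    using Bochner_Integration.integrable_diff[of \<rho>' "\<lambda>y. f y + 1" "\<lambda>_. 1"] by auto
  then show ?thesis
    unfolding rel_entropy_deriv_def .
qed

lemma bregman_rel_entropy:
  assumes "prob_space \<rho>" "prob_space \<rho>'"
    and "rel_entropy \<nu> \<rho> < \<infinity>" and "integrable \<rho>' (rel_entropy_deriv \<nu> \<rho>)"
  shows "bregman (rel_entropy \<nu>) (rel_entropy_deriv \<nu>) \<rho>' \<rho>
    = rel_entropy \<nu> \<rho>' - ereal (\<integral>y. ln (enn2real (RN_deriv \<nu> \<rho> y)) \<partial>\<rho>')"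
proof -
  interpret \<rho>: prob_space \<rho> by fact
  interpret \<rho>': prob_space \<rho>' by fact
  have "integrable \<rho> (\<lambda>y. ln (enn2real (RN_deriv \<nu> \<rho> y)))"
    and rel_entropy_\<rho>: "rel_entropy \<nu> \<rho> = ereal (\<integral>y. ln (enn2real (RN_deriv \<nu> \<rho> y)) \<partial>\<rho>)"
    using assms(3) by (auto simp: rel_entropy_def split: if_splits)
  then have "(\<integral>y. rel_entropy_deriv \<nu> \<rho> y \<partial>\<rho>) = (\<integral>y. ln (enn2real (RN_deriv \<nu> \<rho> y)) \<partial>\<rho>) + 1"
    by (simp add: rel_entropy_deriv_def \<rho>.prob_space)
  moreover have "integrable \<rho>' (\<lambda>y. ln (enn2real (RN_deriv \<nu> \<rho> y)))"
    using assms(4) integrable_rel_entropy_deriv_iff[OF \<rho>'.finite_measure_axioms] by simp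
  then have "(\<integral>y. rel_entropy_deriv \<nu> \<rho> y \<partial>\<rho>') = (\<integral>y. ln (enn2real (RN_deriv \<nu> \<rho> y)) \<partial>\<rho>') + 1"
    by (simp add: rel_entropy_deriv_def \<rho>'.prob_space)
  ultimately show ?thesis
    unfolding bregman_def rel_entropy_\<rho> by (cases "rel_entropy \<nu> \<rho>'") simp_all
qed

section \<open>The potentials of \<open>F\<close> and their couplings\<close>

lemma (in sigma_finite_measure) phi_plus_AE_eq:
  assumes [measurable]: "f \<in> borel_measurable M"
    and marginal: "margX R M \<psi> = density M (\<lambda>x. ennreal (exp (f x)))"
  shows "AE x in M. phi_plus R M \<psi> x = f x"
proof -
  have "AE x in M. ennreal (exp (f x)) = RN_deriv M (margX R M \<psi>) x"
    unfolding marginal by (rule RN_deriv_unique) simp_all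
  then show ?thesis
    by eventually_elim (metis enn2real_ennreal exp_ge_zero ln_exp phi_plus_def)
qed

lemma borel_measurable_phi_plus[measurable]: "phi_plus R \<mu> \<psi> \<in> borel_measurable \<mu>"
  unfolding phi_plus_def by measurable

locale sinkhorn_setting =
  fixes \<mu> :: "'a measure" and \<nu> :: "'b measure" and R :: "('a \<times> 'b) measure"
  assumes prob_space_\<mu>: "prob_space \<mu>" and prob_space_\<nu>: "prob_space \<nu>"
    and sets_R: "sets R = sets (\<mu> \<Otimes>\<^sub>M \<nu>)"
begin

declare sets_R[measurable_cong]

definition coupling :: "('b \<Rightarrow> real) \<Rightarrow> ('a \<times> 'b) measure" where
  "coupling \<phi> = density R (\<lambda>(x, y). ennreal (exp (\<phi> y - phi_plus R \<mu> \<phi> x)))"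

lemma sets_coupling[measurable_cong]: "sets (coupling \<phi>) = sets (\<mu> \<Otimes>\<^sub>M \<nu>)"
  by (simp add: coupling_def sets_R)

lemma Fderiv_eq_distr_coupling: "Fderiv R \<mu> \<nu> \<phi> = distr (coupling \<phi>) \<nu> snd"
  by (simp add: Fderiv_def coupling_def)

lemma density_coupling:
  assumes [measurable]: "\<phi> \<in> borel_measurable \<nu>" "h \<in> borel_measurable R"
  shows "density (coupling \<phi>) (\<lambda>z. ennreal (exp (h z))) =
    density R (\<lambda>z. ennreal (exp (\<phi> (snd z) - phi_plus R \<mu> \<phi> (fst z) + h z)))"
  unfolding coupling_def
  by (subst density_density_eq) (auto simp: split_beta' exp_add ennreal_mult' intro!: arg_cong2[where f=density])

lemma distr_coupling_fst:
  assumes [measurable]: "\<phi> \<in> borel_measurable \<nu>" and "phi_plus_wd R \<mu> \<phi>"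
  shows "distr (coupling \<phi>) \<mu> fst = \<mu>"
proof -
  interpret \<mu>: prob_space \<mu> by (rule prob_space_\<mu>)
  obtain f where [measurable]: "f \<in> borel_measurable \<mu>"
    and marginal: "margX R \<mu> \<phi> = density \<mu> (\<lambda>x. ennreal (exp (f x)))"
    using assms(2) unfolding phi_plus_wd_def by blast
  have phi_plus_eq: "AE x in \<mu>. phi_plus R \<mu> \<phi> x = f x"
    by (rule \<mu>.phi_plus_AE_eq[OF _ marginal]) simp
  let ?R\<phi> = "density R (\<lambda>(x, y). ennreal (exp (\<phi> y)))"
  have "coupling \<phi> = density ?R\<phi> (\<lambda>z. ennreal (exp (- phi_plus R \<mu> \<phi> (fst z))))"
    unfolding coupling_def
    by (subst density_density_eq)
       (auto simp: split_beta' exp_diff ennreal_mult' divide_inverse exp_minus intro!: arg_cong2[where f=density])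
  then have "distr (coupling \<phi>) \<mu> fst = density (margX R \<mu> \<phi>) (\<lambda>x. ennreal (exp (- phi_plus R \<mu> \<phi> x)))"
    unfolding margX_def by (simp add: density_distr)
  also have "\<dots> = density \<mu> (\<lambda>x. ennreal (exp (f x)) * ennreal (exp (- phi_plus R \<mu> \<phi> x)))"
    unfolding marginal by (rule density_density_eq) simp_all
  also have "\<dots> = density \<mu> (\<lambda>_. 1)"
    using phi_plus_eq
    by (intro density_cong) (auto elim!: eventually_mono simp: ennreal_mult'[symmetric] exp_minus)
  finally show ?thesis
    by (simp add: density_1)
qed

lemma prob_space_coupling:
  assumes "\<phi> \<in> borel_measurable \<nu>" "phi_plus_wd R \<mu> \<phi>"
  shows "prob_space (coupling \<phi>)"
proof
  have "fst -` space \<mu> \<inter> space (coupling \<phi>) = space (coupling \<phi>)"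
    using measurable_space[of fst "coupling \<phi>" \<mu>] by auto
  then have "emeasure (coupling \<phi>) (space (coupling \<phi>)) = emeasure (distr (coupling \<phi>) \<mu> fst) (space \<mu>)"
    by (simp add: emeasure_distr)
  then show "emeasure (coupling \<phi>) (space (coupling \<phi>)) = 1"
    using distr_coupling_fst[OF assms] prob_space.emeasure_space_1[OF prob_space_\<mu>] by simp
qed

lemma density_coupling_ratio:
  assumes [measurable]: "\<phi> \<in> borel_measurable \<nu>" "\<psi> \<in> borel_measurable \<nu>"
  shows "density (coupling \<phi>) (\<lambda>z. ennreal (exp (\<psi> (snd z) - \<phi> (snd z)
      - phi_plus R \<mu> \<psi> (fst z) + phi_plus R \<mu> \<phi> (fst z)))) = coupling \<psi>"
  by (subst density_coupling) (simp_all add: coupling_def split_beta')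

lemma Fderiv_preimage_maximizes:
  assumes \<phi>: "Fdom R \<mu> \<nu> \<phi>" "Fderiv R \<mu> \<nu> \<phi> = \<rho>" "integrable \<rho> \<phi>"
    and \<psi>: "Fdom R \<mu> \<nu> \<psi>" "integrable \<rho> \<psi>"
  shows "(\<integral>y. \<psi> y \<partial>\<rho>) - Ffun R \<mu> \<psi> \<le> (\<integral>y. \<phi> y \<partial>\<rho>) - Ffun R \<mu> \<phi>"
proof -
  have [measurable]: "\<phi> \<in> borel_measurable \<nu>" "\<psi> \<in> borel_measurable \<nu>"
    and wd: "phi_plus_wd R \<mu> \<phi>" "phi_plus_wd R \<mu> \<psi>"
    and phi_plus_integrable: "integrable \<mu> (phi_plus R \<mu> \<phi>)" "integrable \<mu> (phi_plus R \<mu> \<psi>)"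
    using \<phi>(1) \<psi>(1) by (auto simp: Fdom_def)
  let ?P = "coupling \<phi>"
  interpret P: prob_space ?P
    by (rule prob_space_coupling) (simp_all add: wd)
  have fst_marginal: "distr ?P \<mu> fst = \<mu>"
    by (rule distr_coupling_fst) (simp_all add: wd)
  have snd_marginal: "distr ?P \<nu> snd = \<rho>"
    using \<phi>(2) by (simp add: Fderiv_eq_distr_coupling)
  have on_fst: "integrable ?P (\<lambda>z. f (fst z))" "(\<integral>z. f (fst z) \<partial>?P) = (\<integral>x. f x \<partial>\<mu>)"
    if "integrable \<mu> f" "f \<in> borel_measurable \<mu>" for f :: "'a \<Rightarrow> real"
    using that integrable_distr_eq[of fst ?P \<mu> f] integral_distr[of fst ?P \<mu> f] fst_marginal
    by simp_all
  have on_snd: "integrable ?P (\<lambda>z. f (snd z))" "(\<integral>z. f (snd z) \<partial>?P) = (\<integral>y. f y \<partial>\<rho>)"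
    if "integrable \<rho> f" "f \<in> borel_measurable \<nu>" for f :: "'b \<Rightarrow> real"
    using that integrable_distr_eq[of snd ?P \<nu> f] integral_distr[of snd ?P \<nu> f] snd_marginal
    by simp_all
  define w where "w z = \<psi> (snd z) - \<phi> (snd z) - phi_plus R \<mu> \<psi> (fst z) + phi_plus R \<mu> \<phi> (fst z)" for z
  have [measurable]: "w \<in> borel_measurable R"
    unfolding w_def by measurable
  have w_integrable: "integrable ?P w"
    unfolding w_def using \<phi> \<psi> phi_plus_integrable by (simp add: on_fst on_snd)
  have w_integral: "(\<integral>z. w z \<partial>?P) = (\<integral>y. \<psi> y \<partial>\<rho>) - (\<integral>y. \<phi> y \<partial>\<rho>) - Ffun R \<mu> \<psi> + Ffun R \<mu> \<phi>"
    unfolding w_def Ffun_def using \<phi> \<psi> phi_plus_integrable by (simp add: on_fst on_snd)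
  have "(\<integral>\<^sup>+z. ennreal (exp (w z)) \<partial>?P) = emeasure (density ?P (\<lambda>z. ennreal (exp (w z)))) (space ?P)"
    by (subst emeasure_density) (auto intro!: nn_integral_cong)
  also have "\<dots> = 1"
    unfolding w_def density_coupling_ratio[OF \<open>\<phi> \<in> borel_measurable \<nu>\<close> \<open>\<psi> \<in> borel_measurable \<nu>\<close>]
    using prob_space.emeasure_space_1[OF prob_space_coupling[of \<psi>]] wd by (simp add: coupling_def)
  finally have "(\<integral>\<^sup>+z. ennreal (exp (w z)) \<partial>?P) = 1" .
  then have exp_w: "integrable ?P (\<lambda>z. exp (w z))" "(\<integral>z. exp (w z) \<partial>?P) = 1"
    by (auto intro: integrableI_bounded simp: integral_eq_nn_integral)
  have "(\<integral>z. ln (exp (w z)) \<partial>?P) \<le> ln (\<integral>z. exp (w z) \<partial>?P)"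
    by (rule P.integral_ln_le_ln_integral) (simp_all add: exp_w w_integrable)
  then show ?thesis
    using w_integral exp_w by simp
qed

lemma Fstar_at_Fderiv:
  assumes "Fdom R \<mu> \<nu> \<phi>" "Fderiv R \<mu> \<nu> \<phi> = \<rho>" "integrable \<rho> \<phi>"
  shows "Fstar R \<mu> \<nu> \<rho> = ereal ((\<integral>y. \<phi> y \<partial>\<rho>) - Ffun R \<mu> \<phi>)"
  unfolding Fstar_def
proof (rule antisym)
  show "(SUP \<psi>\<in>{\<psi>. Fdom R \<mu> \<nu> \<psi> \<and> integrable \<rho> \<psi>}. ereal ((\<integral>y. \<psi> y \<partial>\<rho>) - Ffun R \<mu> \<psi>))
      \<le> ereal ((\<integral>y. \<phi> y \<partial>\<rho>) - Ffun R \<mu> \<phi>)"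
    using Fderiv_preimage_maximizes[OF assms] by (auto intro!: SUP_least)
  show "ereal ((\<integral>y. \<phi> y \<partial>\<rho>) - Ffun R \<mu> \<phi>)
      \<le> (SUP \<psi>\<in>{\<psi>. Fdom R \<mu> \<nu> \<psi> \<and> integrable \<rho> \<psi>}. ereal ((\<integral>y. \<psi> y \<partial>\<rho>) - Ffun R \<mu> \<psi>))"
    using assms by (intro SUP_upper2[where i=\<phi>]) auto
qed

lemma perturbed_marginal_density:
  assumes \<phi>: "Fdom R \<mu> \<nu> \<phi>" "Fderiv R \<mu> \<nu> \<phi> = \<rho>"
    and [measurable]: "g \<in> borel_measurable \<nu>" and bounded: "\<And>y. \<bar>g y\<bar> \<le> c"
  obtains k where "k \<in> borel_measurable \<mu>" "AE x in \<mu>. exp (- c) \<le> k x \<and> k x \<le> exp c"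
    "margX R \<mu> (\<lambda>y. \<phi> y + g y) = density \<mu> (\<lambda>x. ennreal (k x * exp (phi_plus R \<mu> \<phi> x)))"
    "(\<integral>x. k x \<partial>\<mu>) = (\<integral>y. exp (g y) \<partial>\<rho>)"
proof -
  interpret \<mu>: prob_space \<mu> by (rule prob_space_\<mu>)
  have [measurable]: "\<phi> \<in> borel_measurable \<nu>" and wd: "phi_plus_wd R \<mu> \<phi>"
    using \<phi>(1) by (auto simp: Fdom_def)
  let ?P = "coupling \<phi>"
  \<comment> \<open>The density \<open>k\<close> of \<open>Q\<close> is the conditional expectation of \<open>exp g\<close> given \<open>x\<close> under \<open>?P\<close>.\<close>
  define Q where "Q = distr (density ?P (\<lambda>z. ennreal (exp (g (snd z))))) \<mu> fst"
  have g_bounds: "exp (- c) \<le> exp (g y)" "exp (g y) \<le> exp c" for y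
    using bounded[of y] by simp_all
  note tilted_bounds = emeasure_distr_density_bounds[where h="\<lambda>z. ennreal (exp (g (snd z)))"
      and a="ennreal (exp (- c))" and b="ennreal (exp c)",
      OF _ _ distr_coupling_fst[OF _ wd], folded Q_def]
  have Q_bounds: "ennreal (exp (- c)) * emeasure \<mu> A \<le> emeasure Q A"
    "emeasure Q A \<le> ennreal (exp c) * emeasure \<mu> A" if "A \<in> sets \<mu>" for A
    using that g_bounds by (auto intro!: tilted_bounds ennreal_leI)
  have [simp]: "sets Q = sets \<mu>"
    by (simp add: Q_def)
  obtain k where [measurable]: "k \<in> borel_measurable \<mu>" and Q_density: "Q = density \<mu> (\<lambda>x. ennreal (k x))"
    and k_bounds: "AE x in \<mu>. exp (- c) \<le> k x \<and> k x \<le> exp c"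
    by (rule \<mu>.obtain_bounded_density[where N=Q and a="exp (- c)" and b="exp c"]) (simp_all add: Q_bounds)
  have k_nonneg: "AE x in \<mu>. 0 \<le> k x"
    using k_bounds by eventually_elim (auto intro: order_trans[OF exp_ge_zero])
  show ?thesis
  proof
    show "AE x in \<mu>. exp (- c) \<le> k x \<and> k x \<le> exp c" by (fact k_bounds)
    have "density R (\<lambda>(x, y). ennreal (exp (\<phi> y + g y)))
        = density ?P (\<lambda>z. ennreal (exp (g (snd z) + phi_plus R \<mu> \<phi> (fst z))))"
      by (subst density_coupling) (simp_all add: split_beta')
    also have "\<dots> = density (density ?P (\<lambda>z. ennreal (exp (g (snd z))))) (\<lambda>z. ennreal (exp (phi_plus R \<mu> \<phi> (fst z))))"
      by (subst density_density_eq) (simp_all add: exp_add ennreal_mult')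
    finally have "margX R \<mu> (\<lambda>y. \<phi> y + g y) = density Q (\<lambda>x. ennreal (exp (phi_plus R \<mu> \<phi> x)))"
      unfolding margX_def Q_def by (simp add: density_distr)
    also have "\<dots> = density \<mu> (\<lambda>x. ennreal (k x * exp (phi_plus R \<mu> \<phi> x)))"
      unfolding Q_density using k_nonneg
      by (subst density_density_eq) (auto intro!: density_cong elim!: eventually_mono simp: ennreal_mult')
    finally show "margX R \<mu> (\<lambda>y. \<phi> y + g y) = density \<mu> (\<lambda>x. ennreal (k x * exp (phi_plus R \<mu> \<phi> x)))" .
    have "(\<integral>x. k x \<partial>\<mu>) = (\<integral>x. 1 \<partial>Q)"
      unfolding Q_density using integral_density[of "\<lambda>_. 1 :: real" \<mu> k] k_nonneg by simp
    also have "\<dots> = (\<integral>z. 1 \<partial>density ?P (\<lambda>z. ennreal (exp (g (snd z)))))"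
      unfolding Q_def by (rule integral_distr) simp_all
    also have "\<dots> = (\<integral>z. exp (g (snd z)) \<partial>?P)"
      using integral_density[of "\<lambda>_. 1 :: real" ?P "\<lambda>z. exp (g (snd z))"] by simp
    also have "\<dots> = (\<integral>y. exp (g y) \<partial>\<rho>)"
      unfolding \<phi>(2)[symmetric] Fderiv_eq_distr_coupling by (rule integral_distr[symmetric]) simp_all
    finally show "(\<integral>x. k x \<partial>\<mu>) = (\<integral>y. exp (g y) \<partial>\<rho>)" .
  qed simp
qed

lemma Ffun_perturbation_le:
  assumes \<phi>: "Fdom R \<mu> \<nu> \<phi>" "Fderiv R \<mu> \<nu> \<phi> = \<rho>"
    and [measurable]: "g \<in> borel_measurable \<nu>" and bounded: "\<And>y. \<bar>g y\<bar> \<le> c"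
  shows "Fdom R \<mu> \<nu> (\<lambda>y. \<phi> y + g y)"
    and "Ffun R \<mu> (\<lambda>y. \<phi> y + g y) \<le> Ffun R \<mu> \<phi> + ln (\<integral>y. exp (g y) \<partial>\<rho>)"
proof -
  interpret \<mu>: prob_space \<mu> by (rule prob_space_\<mu>)
  have [measurable]: "\<phi> \<in> borel_measurable \<nu>" and phi_plus_integrable: "integrable \<mu> (phi_plus R \<mu> \<phi>)"
    using \<phi>(1) by (auto simp: Fdom_def)
  obtain k where [measurable]: "k \<in> borel_measurable \<mu>"
    and k_bounds: "AE x in \<mu>. exp (- c) \<le> k x \<and> k x \<le> exp c"
    and marginal: "margX R \<mu> (\<lambda>y. \<phi> y + g y) = density \<mu> (\<lambda>x. ennreal (k x * exp (phi_plus R \<mu> \<phi> x)))"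
    and k_integral: "(\<integral>x. k x \<partial>\<mu>) = (\<integral>y. exp (g y) \<partial>\<rho>)"
    using perturbed_marginal_density[OF \<phi> \<open>g \<in> borel_measurable \<nu>\<close> bounded] by blast
  have k_pos: "AE x in \<mu>. 0 < k x"
    using k_bounds by eventually_elim (auto intro: less_le_trans[OF exp_gt_zero])
  have ln_k_bounded: "AE x in \<mu>. norm (ln (k x)) \<le> c"
    using k_bounds k_pos
  proof eventually_elim
    case (elim x)
    then have "ln (exp (- c)) \<le> ln (k x)" "ln (k x) \<le> ln (exp c)"
      by (subst ln_le_cancel_iff; simp)+
    then show ?case
      by simp
  qed
  define f where "f x = ln (k x) + phi_plus R \<mu> \<phi> x" for x
  have [measurable]: "f \<in> borel_measurable \<mu>"
    unfolding f_def by measurable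
  have "margX R \<mu> (\<lambda>y. \<phi> y + g y) = density \<mu> (\<lambda>x. ennreal (exp (f x)))"
    unfolding marginal f_def using k_pos
    by (intro density_cong) (auto elim!: eventually_mono simp: exp_add)
  then have wd: "phi_plus_wd R \<mu> (\<lambda>y. \<phi> y + g y)"
    and phi_plus_eq: "AE x in \<mu>. phi_plus R \<mu> (\<lambda>y. \<phi> y + g y) x = f x"
    using \<mu>.phi_plus_AE_eq[of f] unfolding phi_plus_wd_def by auto
  have ln_k_integrable: "integrable \<mu> (\<lambda>x. ln (k x))"
    by (rule \<mu>.integrable_const_bound[OF ln_k_bounded]) simp
  have f_integrable: "integrable \<mu> f"
    unfolding f_def using ln_k_integrable phi_plus_integrable by simp
  then show "Fdom R \<mu> \<nu> (\<lambda>y. \<phi> y + g y)"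
    using wd integrable_cong_AE[OF _ _ phi_plus_eq] by (simp add: Fdom_def)
  have "Ffun R \<mu> (\<lambda>y. \<phi> y + g y) = (\<integral>x. f x \<partial>\<mu>)"
    unfolding Ffun_def by (rule integral_cong_AE) (simp_all add: phi_plus_eq)
  also have "\<dots> = (\<integral>x. ln (k x) \<partial>\<mu>) + Ffun R \<mu> \<phi>"
    unfolding f_def Ffun_def using ln_k_integrable phi_plus_integrable by simp
  also have "(\<integral>x. ln (k x) \<partial>\<mu>) \<le> ln (\<integral>x. k x \<partial>\<mu>)"
  proof (rule \<mu>.integral_ln_le_ln_integral[OF _ k_pos ln_k_integrable])
    have "AE x in \<mu>. norm (k x) \<le> exp c"
      using k_bounds k_pos by eventually_elim simp
    then show "integrable \<mu> k"
      by (rule \<mu>.integrable_const_bound) simp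
  qed
  finally show "Ffun R \<mu> (\<lambda>y. \<phi> y + g y) \<le> Ffun R \<mu> \<phi> + ln (\<integral>y. exp (g y) \<partial>\<rho>)"
    by (simp add: k_integral)
qed

lemma Fstar_deriv_in_Fderiv_preimage:
  assumes "\<exists>\<phi>. Fdom R \<mu> \<nu> \<phi> \<and> integrable \<rho> \<phi> \<and> Fderiv R \<mu> \<nu> \<phi> = \<rho>"
  shows "Fdom R \<mu> \<nu> (Fstar_deriv R \<mu> \<nu> \<rho>) \<and> integrable \<rho> (Fstar_deriv R \<mu> \<nu> \<rho>)
    \<and> Fderiv R \<mu> \<nu> (Fstar_deriv R \<mu> \<nu> \<rho>) = \<rho>"
  unfolding Fstar_deriv_def by (rule someI_ex[OF assms])

lemma bregman_Fstar:
  assumes "\<exists>\<phi>. Fdom R \<mu> \<nu> \<phi> \<and> integrable \<rho> \<phi> \<and> Fderiv R \<mu> \<nu> \<phi> = \<rho>"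
  shows "bregman (Fstar R \<mu> \<nu>) (Fstar_deriv R \<mu> \<nu>) \<rho>' \<rho>
    = Fstar R \<mu> \<nu> \<rho>' - ereal ((\<integral>y. Fstar_deriv R \<mu> \<nu> \<rho> y \<partial>\<rho>') - Ffun R \<mu> (Fstar_deriv R \<mu> \<nu> \<rho>))"
proof -
  have "Fstar R \<mu> \<nu> \<rho> = ereal ((\<integral>y. Fstar_deriv R \<mu> \<nu> \<rho> y \<partial>\<rho>) - Ffun R \<mu> (Fstar_deriv R \<mu> \<nu> \<rho>))"
    using Fstar_deriv_in_Fderiv_preimage[OF assms] by (intro Fstar_at_Fderiv) auto
  then show ?thesis
    by (cases "Fstar R \<mu> \<nu> \<rho>'") (simp_all add: bregman_def)
qed

lemma Fstar_minus_ge_variational: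
  assumes \<phi>: "Fdom R \<mu> \<nu> \<phi>" "Fderiv R \<mu> \<nu> \<phi> = \<rho>" "integrable \<rho>' \<phi>"
    and \<rho>': "prob_space \<rho>'" "sets \<rho>' = sets \<nu>"
    and g: "g \<in> borel_measurable \<nu>" and bounded: "\<And>y. \<bar>g y\<bar> \<le> c"
  shows "ereal ((\<integral>y. g y \<partial>\<rho>') - ln (\<integral>y. exp (g y) \<partial>\<rho>))
    \<le> Fstar R \<mu> \<nu> \<rho>' - ereal ((\<integral>y. \<phi> y \<partial>\<rho>') - Ffun R \<mu> \<phi>)"
proof -
  interpret \<rho>': prob_space \<rho>' by (fact \<rho>'(1))
  have "integrable \<rho>' g"
    using \<rho>'(2) g bounded by (intro \<rho>'.integrable_const_bound[where B=c]) (auto cong: measurable_cong_sets)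
  with \<phi>(3) have "integrable \<rho>' (\<lambda>y. \<phi> y + g y)"
    by simp
  with Ffun_perturbation_le(1)[OF \<phi>(1,2) g bounded]
  have "ereal ((\<integral>y. \<phi> y + g y \<partial>\<rho>') - Ffun R \<mu> (\<lambda>y. \<phi> y + g y)) \<le> Fstar R \<mu> \<nu> \<rho>'"
    unfolding Fstar_def by (intro SUP_upper) auto
  moreover have "(\<integral>y. \<phi> y \<partial>\<rho>') - Ffun R \<mu> \<phi> + ((\<integral>y. g y \<partial>\<rho>') - ln (\<integral>y. exp (g y) \<partial>\<rho>))
      \<le> (\<integral>y. \<phi> y + g y \<partial>\<rho>') - Ffun R \<mu> (\<lambda>y. \<phi> y + g y)"
    using Ffun_perturbation_le(2)[OF \<phi>(1,2) g bounded] \<phi>(3) \<open>integrable \<rho>' g\<close> by simp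
  ultimately show ?thesis
    by (cases "Fstar R \<mu> \<nu> \<rho>'") auto
qed

end

theorem lemma3p6:
  fixes \<mu> :: "'a measure" and \<nu> :: "'b measure" and R :: "('a \<times> 'b) measure"
    and \<rho> \<rho>' :: "'b measure"
  assumes "prob_space \<mu>" and "prob_space \<nu>"
    and "sets R = sets (\<mu> \<Otimes>\<^sub>M \<nu>)"
    and "prob_space \<rho>" and "sets \<rho> = sets \<nu>"
    and "prob_space \<rho>'" and "sets \<rho>' = sets \<nu>"
    \<comment> \<open>H_nu is differentiable at rho and its Bregman divergence is defined\<close>
    and "absolutely_continuous \<nu> \<rho>"
    and "AE y in \<nu>. 0 < RN_deriv \<nu> \<rho> y"
    and "rel_entropy \<nu> \<rho> < \<infinity>"
    and "integrable \<rho>' (rel_entropy_deriv \<nu> \<rho>)"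
    \<comment> \<open>F^* is differentiable at rho (rho lies in the range of F') and its Bregman divergence is defined\<close>
    and "\<exists>\<phi>. Fdom R \<mu> \<nu> \<phi> \<and> integrable \<rho> \<phi> \<and> Fderiv R \<mu> \<nu> \<phi> = \<rho>"
    and "\<And>\<phi>. Fdom R \<mu> \<nu> \<phi> \<Longrightarrow> integrable \<rho> \<phi> \<Longrightarrow> Fderiv R \<mu> \<nu> \<phi> = \<rho> \<Longrightarrow> integrable \<rho>' \<phi>"
  shows "bregman (rel_entropy \<nu>) (rel_entropy_deriv \<nu>) \<rho>' \<rho>
           \<le> bregman (Fstar R \<mu> \<nu>) (Fstar_deriv R \<mu> \<nu>) \<rho>' \<rho>"
proof -
  interpret sinkhorn_setting \<mu> \<nu> R
    using assms(1-3) by (rule sinkhorn_setting.intro)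
  define \<phi> where "\<phi> = Fstar_deriv R \<mu> \<nu> \<rho>"
  have \<phi>: "Fdom R \<mu> \<nu> \<phi>" "integrable \<rho> \<phi>" "Fderiv R \<mu> \<nu> \<phi> = \<rho>"
    using Fstar_deriv_in_Fderiv_preimage[OF assms(12)] unfolding \<phi>_def by auto
  have "integrable \<rho>' (\<lambda>y. ln (enn2real (RN_deriv \<nu> \<rho> y)))"
    using assms(11) integrable_rel_entropy_deriv_iff[OF prob_space.finite_measure[OF assms(6)]] by simp
  then have "rel_entropy \<nu> \<rho>' - ereal (\<integral>y. ln (enn2real (RN_deriv \<nu> \<rho> y)) \<partial>\<rho>')
      \<le> Fstar R \<mu> \<nu> \<rho>' - ereal ((\<integral>y. \<phi> y \<partial>\<rho>') - Ffun R \<mu> \<phi>)"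
    by (rule rel_entropy_minus_le_of_variational_bound[OF assms(2,4-9)])
       (rule Fstar_minus_ge_variational[OF \<phi>(1,3) assms(13)[OF \<phi>] assms(6,7)])
  then show ?thesis
    unfolding bregman_rel_entropy[OF assms(4,6,10,11)] bregman_Fstar[OF assms(12)] \<phi>_def .
qed

end
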